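(* Assume the standing setting. Let $\epsilon>0$, fix a coarse index $j\in\mathbb Z$, and let $m$ be an integer with $1\le m\le r$. If $|u^0_i-u^0_{i+1}|\le \epsilon/3^{M}$ for all $i\in\mathbb Z$, then $$|v_m-u_m|\le \tfrac32 h+\tfrac34|d_1+d_2|+\big(\min[m,r-m]+3\big)\epsilon .$$
   Context: Standing setting. Let $F:\mathbb R\to\mathbb R$ be continuously differentiable. For a spatial step $\eta>0$, a time step $\tau>0$ and an initial sequence $(z^0_i)_{i\in\mathbb Z}$ of reals, the EFC (Euler forward in time, centered in space) scheme produces $(z^n_i)_{i\in\mathbb Z,\,n\in\mathbb N}$ by $z^{n+1}_i=z^n_i-F'(z^n_i)\frac{\tau}{2\eta}\,(z^n_{i+1}-z^n_{i-1})$. It satisfies the CFL condition if $|F'(z^n_i)|\,\tau/\eta\le 1$ for all $i\in\mathbb Z$, $n\in\mathbb N$. Fix $a\in\mathbb R$, $h>0$, $\Delta t>0$, an integer $N>1$ and an even integer $r\ge 2$; put $k=h/r$, $dt=\Delta t/r$, $M=Nr$. Let $u_0:\mathbb R\to\mathbb R$. The coarse solution $(w^n_j)$ is the EFC scheme with $\eta=h$, $\tau=\Delta t$, $w^0_j=u_0(a+jh)$; the fine solution $(u^n_i)$ is the EFC scheme with $\eta=k$, $\tau=dt$, $u^0_i=u_0(a+ik)$ (so $w^0_j=u^0_{jr}$). Both are assumed to satisfy the CFL condition. Coarse nodes: $x_j=a+jh$. Interpolant: for a fixed coarse index $j$, set $p_1=x_j$, $p_2=x_{j+1}$, $d_1=w^N_j$,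 $d_2=w^N_{j+1}$, let $q$ be the cubic with $q(0)=p_1$, $q(1)=p_2$, $q'(0)=d_1$, $q'(1)=d_2$, and let $v(t)=q'(t)=(6p_1-6p_2+3d_1+3d_2)t^2+(-6p_1+6p_2-4d_1-2d_2)t+d_1$ for $t\in[0,1]$. For $0\le m\le r$ put $v_m=v(m/r)$ and $u_m=u^M_{jr+m}$ (the fine solution at time step $M$ at the fine node $x_j+mk$). *)

theory Defs
  imports Complex_Main
begin

text \<open>EFC scheme (Euler forward in time, centered in space) for the flux with
derivative F', spatial step eta, time step tau, initial data z0 (indexed by int).
efc F' eta tau z0 n i is z^n_i.\<close>
primrec efc :: "(real \<Rightarrow> real) \<Rightarrow> real \<Rightarrow> real \<Rightarrow> (int \<Rightarrow> real) \<Rightarrow> nat \<Rightarrow> int \<Rightarrow> real" where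
  "efc F' eta tau z0 0 i = z0 i"
| "efc F' eta tau z0 (Suc n) i =
     efc F' eta tau z0 n i
     - F' (efc F' eta tau z0 n i) * (tau / (2 * eta))
       * (efc F' eta tau z0 n (i + 1) - efc F' eta tau z0 n (i - 1))"

definition efc_cfl :: "(real \<Rightarrow> real) \<Rightarrow> real \<Rightarrow> real \<Rightarrow> (int \<Rightarrow> real) \<Rightarrow> bool" where
  "efc_cfl F' eta tau z0 \<longleftrightarrow>
     (\<forall>n i. \<bar>F' (efc F' eta tau z0 n i)\<bar> * tau / eta \<le> 1)"

text \<open>Derivative of the cubic Hermite interpolant q with q(0)=p1, q(1)=p2, q'(0)=d1, q'(1)=d2.\<close>
definition hermite_v :: "real \<Rightarrow> real \<Rightarrow> real \<Rightarrow> real \<Rightarrow> real \<Rightarrow> real" where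
  "hermite_v p1 p2 d1 d2 t =
     (6*p1 - 6*p2 + 3*d1 + 3*d2) * t^2 + (-6*p1 + 6*p2 - 4*d1 - 2*d2) * t + d1"

end

theory Submission
  imports Defs
begin

text \<open>Under the CFL condition an EFC step \<open>z\<^sub>i \<mapsto> z\<^sub>i - c\<^sub>i (z\<^sub>i\<^sub>+\<^sub>1 - z\<^sub>i\<^sub>-\<^sub>1)\<close> has
\<open>\<bar>c\<^sub>i\<bar> \<le> 1/2\<close>, so if neighbouring values differ by at most D, the step moves every value by
at most D and leaves neighbouring differences of at most 3D. Hence after n steps from data with
neighbouring differences \<open>\<delta>\<close>, every value lies within \<open>((3^n - 1)/2 + k) \<delta>\<close> of the initial
value k nodes to its left. The fine data have \<open>\<delta> = \<epsilon>/3^M\<close> and the coarse data \<open>r \<delta>\<close>; as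
\<open>r 3^N \<le> 3^M\<close>, the values \<open>d\<^sub>1\<close>, \<open>d\<^sub>2\<close> and \<open>u\<^sub>m\<close> all lie within a few \<open>\<epsilon>\<close> of \<open>u\<^sub>0(x\<^sub>j)\<close>.
Finally \<open>v(t) = 6h t(1-t) - 3t(1-t)(d\<^sub>1+d\<^sub>2) + (1-2t)(d\<^sub>1-d\<^sub>2)/2 + (d\<^sub>1+d\<^sub>2)/2\<close> with
\<open>t(1-t) \<le> 1/4\<close>, so \<open>\<bar>v\<^sub>m - u\<^sub>m\<bar>\<close> exceeds \<open>3/2 h + 3/4 \<bar>d\<^sub>1 + d\<^sub>2\<bar>\<close> by at most the sum of
the distances of \<open>d\<^sub>1\<close>, \<open>d\<^sub>2\<close> and \<open>u\<^sub>m\<close> to any common value.\<close>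

lemma abs_mult_centred_diff_le:
  fixes c D x y z :: real
  assumes "\<bar>c\<bar> \<le> 1/2" "\<bar>x - y\<bar> \<le> D" "\<bar>y - z\<bar> \<le> D"
  shows "\<bar>c * (z - x)\<bar> \<le> D"
proof -
  have "\<bar>c\<bar> * \<bar>z - x\<bar> \<le> 1/2 * (2 * D)"
    using assms by (intro mult_mono) auto
  then show ?thesis by (simp add: abs_mult)
qed

lemma efc_cfl_coeff_le:
  assumes "efc_cfl F' eta tau z0" "eta > 0" "tau > 0"
  shows "\<bar>F' (efc F' eta tau z0 n i) * (tau / (2 * eta))\<bar> \<le> 1/2"
  using assms unfolding efc_cfl_def by (auto simp: abs_mult)

lemma efc_increment_le:
  assumes cfl: "efc_cfl F' eta tau z0" and pos: "eta > 0" "tau > 0"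
    and diff: "\<And>i. \<bar>efc F' eta tau z0 n i - efc F' eta tau z0 n (i + 1)\<bar> \<le> D"
  shows "\<bar>efc F' eta tau z0 (Suc n) i - efc F' eta tau z0 n i\<bar> \<le> D"
proof -
  have "\<bar>efc F' eta tau z0 n (i - 1) - efc F' eta tau z0 n i\<bar> \<le> D"
    using diff[of "i - 1"] by simp
  from abs_mult_centred_diff_le[OF efc_cfl_coeff_le[OF cfl pos] this diff]
  show ?thesis by simp
qed

lemma efc_neighbour_diff_Suc_le:
  assumes cfl: "efc_cfl F' eta tau z0" and pos: "eta > 0" "tau > 0"
    and diff: "\<And>i. \<bar>efc F' eta tau z0 n i - efc F' eta tau z0 n (i + 1)\<bar> \<le> D"
  shows "\<bar>efc F' eta tau z0 (Suc n) i - efc F' eta tau z0 (Suc n) (i + 1)\<bar> \<le> 3 * D"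
  using efc_increment_le[OF assms, of i] efc_increment_le[OF assms, of "i + 1"] diff[of i]
  by linarith

lemma efc_neighbour_diff_le:
  assumes cfl: "efc_cfl F' eta tau z0" and pos: "eta > 0" "tau > 0"
    and diff0: "\<And>i. \<bar>z0 i - z0 (i + 1)\<bar> \<le> \<delta>"
  shows "\<bar>efc F' eta tau z0 n i - efc F' eta tau z0 n (i + 1)\<bar> \<le> 3 ^ n * \<delta>"
proof (induction n arbitrary: i)
  case 0
  show ?case using diff0 by simp
next
  case (Suc n)
  show ?case
    using efc_neighbour_diff_Suc_le[OF cfl pos Suc.IH] by (simp only: power_Suc mult.assoc)
qed

lemma efc_drift_le:
  assumes cfl: "efc_cfl F' eta tau z0" and pos: "eta > 0" "tau > 0"
    and diff0: "\<And>i. \<bar>z0 i - z0 (i + 1)\<bar> \<le> \<delta>"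
  shows "\<bar>efc F' eta tau z0 n i - z0 i\<bar> \<le> (3 ^ n - 1) / 2 * \<delta>"
proof (induction n)
  case 0
  show ?case by simp
next
  case (Suc n)
  have "\<bar>efc F' eta tau z0 (Suc n) i - efc F' eta tau z0 n i\<bar> \<le> 3 ^ n * \<delta>"
    using efc_increment_le[OF cfl pos efc_neighbour_diff_le[OF cfl pos diff0]] .
  moreover have "(3 ^ Suc n - 1) / 2 * \<delta> = (3 ^ n - 1) / 2 * \<delta> + 3 ^ n * \<delta>"
    by (simp add: field_simps)
  ultimately show ?case using Suc.IH by linarith
qed

lemma abs_diff_shift_le:
  fixes z :: "int \<Rightarrow> real"
  assumes "\<And>i. \<bar>z i - z (i + 1)\<bar> \<le> \<delta>"
  shows "\<bar>z (i + int k) - z i\<bar> \<le> real k * \<delta>"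
proof (induction k)
  case 0
  show ?case by simp
next
  case (Suc k)
  have "\<bar>z (i + int k) - z (i + int k + 1)\<bar> \<le> \<delta>" by (rule assms)
  with Suc.IH show ?case by (simp add: add.assoc abs_le_iff algebra_simps)
qed

lemma abs_diff_subsample_le:
  fixes z :: "int \<Rightarrow> real"
  assumes "\<And>i. \<bar>z i - z (i + 1)\<bar> \<le> \<delta>"
  shows "\<bar>z (i * int r) - z ((i + 1) * int r)\<bar> \<le> real r * \<delta>"
  using abs_diff_shift_le[where z = z, OF assms, of "i * int r" r]
  by (simp add: distrib_right abs_minus_commute)

lemma efc_dist_initial_le:
  assumes cfl: "efc_cfl F' eta tau z0" and pos: "eta > 0" "tau > 0"
    and diff0: "\<And>i. \<bar>z0 i - z0 (i + 1)\<bar> \<le> \<delta>"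
  shows "\<bar>efc F' eta tau z0 n (i + int k) - z0 i\<bar> \<le> ((3 ^ n - 1) / 2 + real k) * \<delta>"
  using efc_drift_le[OF assms, of n "i + int k"] abs_diff_shift_le[where z = z0, OF diff0, of i k]
  unfolding distrib_right by arith

lemma hermite_v_eq:
  "hermite_v p1 p2 d1 d2 t = 6 * (p2 - p1) * (t * (1 - t)) - 3 * (t * (1 - t)) * (d1 + d2)
     + (1 - 2 * t) * (d1 - d2) / 2 + (d1 + d2) / 2"
  unfolding hermite_v_def by (simp add: field_simps power2_eq_square)

lemma hermite_v_dist_le:
  fixes t y z :: real
  assumes t: "0 \<le> t" "t \<le> 1"
  shows "\<bar>hermite_v p1 p2 d1 d2 t - y\<bar>
    \<le> 3/2 * \<bar>p2 - p1\<bar> + 3/4 * \<bar>d1 + d2\<bar> + (\<bar>d1 - z\<bar> + \<bar>d2 - z\<bar> + \<bar>y - z\<bar>)"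
proof -
  define s where "s = t * (1 - t)"
  have "1/4 - s = (t - 1/2)\<^sup>2"
    by (simp add: s_def power2_eq_square algebra_simps)
  then have s: "0 \<le> s" "s \<le> 1/4"
    using t zero_le_power2[of "t - 1/2"] by (simp add: s_def, linarith)
  define A where "A = 6 * (p2 - p1) * s"
  define B where "B = 3 * s * (d1 + d2)"
  define C where "C = (1 - 2 * t) * (d1 - d2) / 2"
  have "\<bar>A\<bar> \<le> 3/2 * \<bar>p2 - p1\<bar>"
    using s mult_right_mono[of "6 * s" "3/2" "\<bar>p2 - p1\<bar>"]
    unfolding A_def abs_mult by (simp add: abs_of_nonneg mult_ac)
  moreover have "\<bar>B\<bar> \<le> 3/4 * \<bar>d1 + d2\<bar>"
    using s mult_right_mono[of "3 * s" "3/4" "\<bar>d1 + d2\<bar>"]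
    unfolding B_def abs_mult by (simp add: abs_of_nonneg mult_ac)
  moreover have "2 * \<bar>C\<bar> \<le> \<bar>d1 - z\<bar> + \<bar>d2 - z\<bar>"
  proof -
    have "2 * \<bar>C\<bar> \<le> \<bar>d1 - d2\<bar>"
      using t mult_right_mono[of "\<bar>1 - 2 * t\<bar>" 1 "\<bar>d1 - d2\<bar>"] by (simp add: C_def abs_mult)
    also have "\<dots> \<le> \<bar>d1 - z\<bar> + \<bar>d2 - z\<bar>"
      using dist_triangle2[of d1 d2 z] by (simp add: dist_real_def)
    finally show ?thesis .
  qed
  moreover have "hermite_v p1 p2 d1 d2 t = A - B + C + (d1 + d2) / 2"
    unfolding hermite_v_eq A_def B_def C_def s_def ..
  ultimately show ?thesis
    using abs_ge_self[of "d1 - z"] abs_ge_minus_self[of "d1 - z"]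
      abs_ge_self[of "d2 - z"] abs_ge_minus_self[of "d2 - z"]
      abs_ge_self[of "y - z"] abs_ge_minus_self[of "y - z"]
    unfolding add_divide_distrib abs_le_iff by linarith
qed

lemma efc_refinement_dist_le:
  fixes z :: "int \<Rightarrow> real"
  assumes cfl_coarse: "efc_cfl F' eta tau (\<lambda>i. z (i * int r))" and coarse_pos: "eta > 0" "tau > 0"
    and cfl_fine: "efc_cfl F' eta' tau' z" and fine_pos: "eta' > 0" "tau' > 0"
    and diff: "\<And>i. \<bar>z i - z (i + 1)\<bar> \<le> \<delta>"
  shows "\<bar>efc F' eta tau (\<lambda>i. z (i * int r)) n j - z (j * int r)\<bar>
      + \<bar>efc F' eta tau (\<lambda>i. z (i * int r)) n (j + 1) - z (j * int r)\<bar>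
      + \<bar>efc F' eta' tau' z n' (j * int r + int m) - z (j * int r)\<bar>
    \<le> (real r * 3 ^ n + (3 ^ n' - 1) / 2 + real m) * \<delta>"
proof -
  note coarse = efc_dist_initial_le[OF cfl_coarse coarse_pos abs_diff_subsample_le[where z = z, OF diff]]
  have "\<bar>efc F' eta tau (\<lambda>i. z (i * int r)) n j - z (j * int r)\<bar>
      + \<bar>efc F' eta tau (\<lambda>i. z (i * int r)) n (j + 1) - z (j * int r)\<bar>
      + \<bar>efc F' eta' tau' z n' (j * int r + int m) - z (j * int r)\<bar>
    \<le> (3 ^ n - 1) / 2 * (real r * \<delta>) + ((3 ^ n - 1) / 2 + 1) * (real r * \<delta>)
      + ((3 ^ n' - 1) / 2 + real m) * \<delta>"
    using coarse[of n j 0] coarse[of n j 1] efc_dist_initial_le[OF cfl_fine fine_pos diff]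
    by (intro add_mono) simp_all
  also have "\<dots> = (real r * 3 ^ n + (3 ^ n' - 1) / 2 + real m) * \<delta>"
    by (simp add: field_simps)
  finally show ?thesis .
qed

lemma mult_pow_le_pow_mult:
  fixes b N r :: nat
  assumes "2 \<le> b" "2 \<le> N" "2 \<le> r"
  shows "r * b ^ N \<le> b ^ (N * r)"
proof -
  have "r < 2 ^ r" by (rule less_exp)
  also have "(2::nat) ^ r \<le> b ^ r" using assms(1) by (rule power_mono) simp
  finally have "r * b ^ N \<le> b ^ r * b ^ N" by simp
  also have "\<dots> = b ^ (r + N)" by (simp add: power_add)
  also have "\<dots> \<le> b ^ (N * r)"
  proof (rule power_increasing)
    have "2 * r \<le> N * r" "2 * N \<le> N * r"
      using assms by simp_all
    then show "r + N \<le> N * r" by linarith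
  qed (use assms in simp)
  finally show ?thesis .
qed

lemma refinement_budget_le:
  fixes N r m :: nat and \<epsilon> :: real
  assumes "2 \<le> N" "2 \<le> r" "m \<le> r" "0 \<le> \<epsilon>"
  shows "(real r * 3 ^ N + (3 ^ (N * r) - 1) / 2 + real m) * (\<epsilon> / 3 ^ (N * r)) \<le> 5/2 * \<epsilon>"
proof -
  have "r * 3 ^ N \<le> 3 ^ (N * r)"
    using assms by (intro mult_pow_le_pow_mult) auto
  then have "real (r * 3 ^ N) \<le> real (3 ^ (N * r))"
    by (simp only: of_nat_le_iff)
  then have r_le: "real r * 3 ^ N \<le> 3 ^ (N * r)"
    by simp
  have "real m \<le> real r * 3 ^ N"
    using assms(3) mult_right_mono[of 1 "3 ^ N" "real r"] by (simp add: mult.commute)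
  then have "real r * 3 ^ N + (3 ^ (N * r) - 1) / 2 + real m \<le> 5/2 * 3 ^ (N * r)"
    using r_le unfolding diff_divide_distrib by linarith
  then have "(real r * 3 ^ N + (3 ^ (N * r) - 1) / 2 + real m) * (\<epsilon> / 3 ^ (N * r))
      \<le> 5/2 * 3 ^ (N * r) * (\<epsilon> / 3 ^ (N * r))"
    using assms(4) by (intro mult_right_mono) auto
  then show ?thesis
    by simp
qed

theorem theorem1:
  fixes F F' :: "real \<Rightarrow> real" and u0 :: "real \<Rightarrow> real"
    and a h \<Delta>t \<epsilon> :: real and N r m :: nat and j :: int
  assumes F_deriv: "\<And>x. (F has_real_derivative F' x) (at x)"
    and F'_cont: "continuous_on UNIV F'"
    and h_pos: "h > 0" and dt_pos: "\<Delta>t > 0"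
    and N_gt: "N > 1" and r_even: "even r" and r_ge: "r \<ge> 2"
    and cfl_coarse: "efc_cfl F' h \<Delta>t (\<lambda>j. u0 (a + real_of_int j * h))"
    and cfl_fine: "efc_cfl F' (h / real r) (\<Delta>t / real r) (\<lambda>i. u0 (a + real_of_int i * (h / real r)))"
    and eps_pos: "\<epsilon> > 0"
    and m_ge: "1 \<le> m" and m_le: "m \<le> r"
    and init_small: "\<And>i::int.
      \<bar>efc F' (h / real r) (\<Delta>t / real r) (\<lambda>i. u0 (a + real_of_int i * (h / real r))) 0 i
       - efc F' (h / real r) (\<Delta>t / real r) (\<lambda>i. u0 (a + real_of_int i * (h / real r))) 0 (i + 1)\<bar>
       \<le> \<epsilon> / 3 ^ (N * r)"
  shows
    "let k = h / real r; dt = \<Delta>t / real r; M = N * r;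
         w = efc F' h \<Delta>t (\<lambda>j. u0 (a + real_of_int j * h));
         u = efc F' k dt (\<lambda>i. u0 (a + real_of_int i * k));
         p1 = a + real_of_int j * h; p2 = a + real_of_int (j + 1) * h;
         d1 = w N j; d2 = w N (j + 1);
         v_m = hermite_v p1 p2 d1 d2 (real m / real r);
         u_m = u M (j * int r + int m)
     in \<bar>v_m - u_m\<bar> \<le> 3/2 * h + 3/4 * \<bar>d1 + d2\<bar> + (real (min m (r - m)) + 3) * \<epsilon>"
proof -
  define zf where "zf = (\<lambda>i. u0 (a + real_of_int i * (h / real r)))"
  define \<delta> where "\<delta> = \<epsilon> / 3 ^ (N * r)"
  have r_pos: "real r > 0"
    using r_ge by simp
  have coarse_eq: "(\<lambda>j. u0 (a + real_of_int j * h)) = (\<lambda>i. zf (i * int r))"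
    using r_pos by (simp add: zf_def)
  have fine_pos: "h / real r > 0" "\<Delta>t / real r > 0"
    using r_pos h_pos dt_pos by simp_all
  have "\<bar>zf i - zf (i + 1)\<bar> \<le> \<delta>" for i
    using init_small by (simp add: zf_def \<delta>_def)
  note dist = efc_refinement_dist_le[OF cfl_coarse[unfolded coarse_eq] h_pos dt_pos
      cfl_fine[folded zf_def] fine_pos this, of N j "N * r" m]
  have "(real r * 3 ^ N + (3 ^ (N * r) - 1) / 2 + real m) * \<delta> \<le> 5/2 * \<epsilon>" (is "?budget \<le> _")
    unfolding \<delta>_def using N_gt r_ge m_le eps_pos by (intro refinement_budget_le) auto
  also have "\<dots> \<le> (real (min m (r - m)) + 3) * \<epsilon>"
    using eps_pos by simp
  finally have "?budget \<le> (real (min m (r - m)) + 3) * \<epsilon>" .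
  note err = order_trans[OF dist this]
  have t: "0 \<le> real m / real r" "real m / real r \<le> 1"
    using m_le r_pos by simp_all
  have "\<bar>(a + real_of_int (j + 1) * h) - (a + real_of_int j * h)\<bar> = h"
    using h_pos by (simp add: algebra_simps)
  note hermite = hermite_v_dist_le[OF t, of "a + real_of_int j * h" "a + real_of_int (j + 1) * h",
      unfolded this]
  show ?thesis
    unfolding Let_def coarse_eq zf_def[symmetric] by (rule order_trans[OF hermite add_left_mono[OF err]])
qed

end
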